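(* Let $\mathcal{G}=(\mathcal{V},\mathcal{E})$ be an undirected graph with $n$ nodes and $E$ edges, with incidence matrix $A\in\mathbb{R}^{n\times E}$. For each node $i$ let $f_i:\mathbb{R}\to\mathbb{R}$ be $M_i$-smooth and $\mu_i$-strongly convex, and let $F(\lambda)=\sum_{i=1}^n f_i^*(u_i^T A\lambda)$ for $\lambda\in\mathbb{R}^E$. Then for every $\lambda\in\mathbb{R}^E$, $$\|\nabla F(\lambda)\|_2=\|\nabla F(\lambda)\|_{A^+A}=\|\nabla F(\lambda)\|_{A^+A}^*.$$
   Context: The incidence matrix $A$ has, in each column $\ell$ (edge $\ell\equiv(i,j)$), one entry $+1$ and one entry $-1$ in the rows of the endpoints $i,j$ (signs arbitrary), and zeros elsewhere. $u_i$ is the $i$-th standard basis vector of $\mathbb{R}^n$; $f_i^*(y)=\sup_x(yx-f_i(x))$ is the Fenchel conjugate. $A^+$ denotes the Moore–Penrose pseudo-inverse of $A$. The semi-norm $\|x\|_{A^+A}$ is $(x^TA^+Ax)^{1/2}$, and its dual is $\|z\|_{A^+A}^*=\sup_{x\in\mathbb{R}^E}\{z^Tx : \|x\|_{A^+A}\le 1\}$. *)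

theory Defs
  imports "HOL-Analysis.Analysis" "HOL-Library.Extended_Real"
begin

definition undirected_graph :: "('e \<Rightarrow> 'n set) \<Rightarrow> bool" where
  "undirected_graph ends \<longleftrightarrow> (\<forall>l. card (ends l) = 2) \<and> inj ends"

definition incidence_matrix :: "('e \<Rightarrow> 'n set) \<Rightarrow> real^'e^'n \<Rightarrow> bool" where
  "incidence_matrix ends A \<longleftrightarrow>
     (\<forall>l. \<exists>i j. ends l = {i, j} \<and> i \<noteq> j \<and> A$i$l = 1 \<and> A$j$l = -1 \<and>
                (\<forall>k. k \<noteq> i \<and> k \<noteq> j \<longrightarrow> A$k$l = 0))"

definition smooth_with :: "real \<Rightarrow> (real \<Rightarrow> real) \<Rightarrow> bool" where
  "smooth_with M f \<longleftrightarrow> (\<exists>f'. (\<forall>x. (f has_real_derivative f' x) (at x)) \<and>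
       (\<forall>x y. \<bar>f' x - f' y\<bar> \<le> M * \<bar>x - y\<bar>))"

definition strongly_convex :: "real \<Rightarrow> (real \<Rightarrow> real) \<Rightarrow> bool" where
  "strongly_convex \<mu> f \<longleftrightarrow> (\<forall>x y t. 0 \<le> t \<and> t \<le> 1 \<longrightarrow>
       f (t * x + (1 - t) * y) \<le> t * f x + (1 - t) * f y - \<mu> / 2 * t * (1 - t) * (x - y)^2)"

definition fenchel_conj :: "(real \<Rightarrow> real) \<Rightarrow> real \<Rightarrow> real" where
  "fenchel_conj f y = (SUP x. y * x - f x)"

definition pinv :: "real^'c^'r \<Rightarrow> real^'r^'c" where
  "pinv A = (THE X. A ** X ** A = A \<and> X ** A ** X = X \<and>
                    transpose (A ** X) = A ** X \<and> transpose (X ** A) = X ** A)"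

definition seminorm_PA :: "real^'e^'n \<Rightarrow> real^'e \<Rightarrow> real" where
  "seminorm_PA A x = sqrt (x \<bullet> ((pinv A ** A) *v x))"

definition dual_seminorm_PA :: "real^'e^'n \<Rightarrow> real^'e \<Rightarrow> ereal" where
  "dual_seminorm_PA A z = (SUP x \<in> {x. seminorm_PA A x \<le> 1}. ereal (z \<bullet> x))"

end

theory Submission
  imports Defs
begin

text \<open>Each conjugate \<open>f\<^sub>i\<^sup>*\<close> of a smooth strongly convex \<open>f\<^sub>i\<close> is differentiable with
  derivative \<open>(f\<^sub>i')\<^sup>-\<^sup>1\<close>, so by the chain rule \<open>F\<close> has a gradient of the form \<open>g = A\<^sup>T v\<close>,
  which lies in the row space of \<open>A\<close>. The Penrose conditions make \<open>P = A\<^sup>+A\<close> the orthogonal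
  projection onto that row space, hence \<open>\<parallel>x\<parallel>\<^sub>A\<^sub>+\<^sub>A = \<parallel>P x\<parallel>\<close>; \<open>P g = g\<close> gives the first equality,
  and Cauchy--Schwarz together with the witness \<open>g / \<parallel>g\<parallel>\<close> gives the dual one.\<close>

section \<open>Orthogonal projection onto a subspace\<close>

lemma closest_point_in_subspace:
  fixes S :: "'a::euclidean_space set"
  shows "subspace S \<Longrightarrow> closest_point S x \<in> S"
  using closed_subspace closest_point_in_set subspace_0 by blast

lemma closest_point_subspace_orthogonal:
  fixes S :: "'a::euclidean_space set"
  assumes "subspace S" "w \<in> S"
  shows "(x - closest_point S x) \<bullet> w = 0"
proof -
  let ?p = "closest_point S x"
  have S: "convex S" "closed S"
    using assms(1) by (simp_all add: subspace_imp_convex closed_subspace)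
  have "(x - ?p) \<bullet> ((?p + c *\<^sub>R w) - ?p) \<le> 0" for c
    by (rule closest_point_dot[OF S])
       (simp add: closest_point_in_subspace assms subspace_add subspace_scale)
  from this[of 1] this[of "-1"] show ?thesis by simp
qed

lemma closest_point_subspace_unique:
  fixes S :: "'a::euclidean_space set"
  assumes "subspace S" "y \<in> S" "\<And>w. w \<in> S \<Longrightarrow> (x - y) \<bullet> w = 0"
  shows "closest_point S x = y"
proof -
  have "dist x y \<le> dist x z" if "z \<in> S" for z
  proof -
    have "(x - y) \<bullet> (y - z) = 0"
      using assms that by (simp add: subspace_diff)
    then have "norm (x - z)^2 = norm (x - y)^2 + norm (y - z)^2"
      using norm_add_Pythagorean[of "x - y" "y - z"] by (simp add: orthogonal_def)
    then show ?thesis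
      using power2_le_imp_le[of "norm (x - y)" "norm (x - z)"] by (simp add: dist_norm)
  qed
  then show ?thesis
    using closest_point_unique assms(1,2) by (metis closed_subspace subspace_imp_convex)
qed

lemma closest_point_subspace_self_adjoint:
  fixes S :: "'a::euclidean_space set"
  assumes "subspace S"
  shows "closest_point S x \<bullet> z = x \<bullet> closest_point S z"
proof -
  note in_S = closest_point_in_subspace[OF assms]
  have "(z - closest_point S z) \<bullet> closest_point S x = 0"
    by (rule closest_point_subspace_orthogonal[OF assms in_S])
  then have "closest_point S x \<bullet> z = closest_point S x \<bullet> closest_point S z"
    by (metis inner_commute inner_diff_right eq_iff_diff_eq_0)
  also have "\<dots> = x \<bullet> closest_point S z"
    using closest_point_subspace_orthogonal[OF assms in_S, of x z]
    by (simp add: inner_diff_left)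
  finally show ?thesis .
qed

lemma linear_closest_point_subspace:
  fixes S :: "'a::euclidean_space set"
  assumes "subspace S"
  shows "linear (closest_point S)"
proof -
  note in_S = closest_point_in_subspace[OF assms]
  note orth = closest_point_subspace_orthogonal[OF assms]
  show ?thesis
  proof (rule linearI)
    fix x y
    show "closest_point S (x + y) = closest_point S x + closest_point S y"
      using orth[of _ x] orth[of _ y]
      by (intro closest_point_subspace_unique assms subspace_add in_S)
         (simp add: algebra_simps inner_diff_left inner_add_left)
  next
    fix c x
    show "closest_point S (c *\<^sub>R x) = c *\<^sub>R closest_point S x"
      using orth[of _ x]
      by (intro closest_point_subspace_unique assms subspace_scale in_S)
         (simp add: inner_diff_left flip: scaleR_diff_right)
  qed
qed

section \<open>The Moore--Penrose pseudo-inverse\<close>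

lemma matrix_vector_mult_closest_point_rowspace:
  fixes A :: "real^'c^'r"
  shows "A *v closest_point (span (rows A)) x = A *v x"
proof -
  have "A $ i \<in> span (rows A)" for i
    by (intro span_base) (auto simp: rows_def row_def)
  then have "(x - closest_point (span (rows A)) x) \<bullet> A $ i = 0" for i
    by (rule closest_point_subspace_orthogonal[OF subspace_span])
  then have "(A *v (x - closest_point (span (rows A)) x)) $ i = 0" for i
    by (simp add: matrix_vector_mul_component inner_commute)
  then show ?thesis
    by (simp add: vec_eq_iff matrix_vector_mult_diff_distrib)
qed

lemma subspace_range_matrix_vector_mult:
  fixes A :: "real^'c^'r"
  shows "subspace (range (\<lambda>x. A *v x))"
  by (rule linear_subspace_image) auto

definition pinv_map :: "real^'c^'r \<Rightarrow> real^'r \<Rightarrow> real^'c" where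
  "pinv_map A y =
     closest_point (span (rows A)) (SOME x. A *v x = closest_point (range (\<lambda>x. A *v x)) y)"

lemma pinv_map_in_rowspace: "pinv_map A y \<in> span (rows A)"
  unfolding pinv_map_def by (simp add: closest_point_in_subspace)

lemma matrix_vector_mult_pinv_map: "A *v pinv_map A y = closest_point (range (\<lambda>x. A *v x)) y"
proof -
  have "closest_point (range (\<lambda>x. A *v x)) y \<in> range (\<lambda>x. A *v x)"
    by (simp add: closest_point_in_subspace subspace_range_matrix_vector_mult)
  then have "\<exists>x. A *v x = closest_point (range (\<lambda>x. A *v x)) y" by auto
  then show ?thesis
    unfolding pinv_map_def matrix_vector_mult_closest_point_rowspace by (rule someI_ex)
qed

lemma pinv_map_unique:
  assumes "r \<in> span (rows A)" "A *v r = closest_point (range (\<lambda>x. A *v x)) y"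
  shows "pinv_map A y = r"
  using assms pinv_map_in_rowspace matrix_vector_mult_pinv_map
  by (metis matrix_vector_mul_injective_on_rowspace)

lemma linear_pinv_map: "linear (pinv_map A)"
proof -
  note P = linear_closest_point_subspace[OF subspace_range_matrix_vector_mult]
  show ?thesis
  proof (rule linearI)
    fix x y
    show "pinv_map A (x + y) = pinv_map A x + pinv_map A y"
      by (intro pinv_map_unique span_add pinv_map_in_rowspace)
         (simp add: matrix_vector_right_distrib matrix_vector_mult_pinv_map linear_add[OF P])
  next
    fix c x
    show "pinv_map A (c *\<^sub>R x) = c *\<^sub>R pinv_map A x"
      by (intro pinv_map_unique span_scale pinv_map_in_rowspace)
         (simp add: matrix_vector_mult_scaleR matrix_vector_mult_pinv_map linear_scale[OF P])
  qed
qed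

lemma pinv_map_matrix_vector_mult: "pinv_map A (A *v x) = closest_point (span (rows A)) x"
  by (intro pinv_map_unique)
     (simp_all add: closest_point_in_subspace closest_point_self
        matrix_vector_mult_closest_point_rowspace)

lemma matrix_symmetric_if_self_adjoint:
  fixes M :: "real^'n^'n"
  assumes "\<And>x y. (M *v x) \<bullet> y = x \<bullet> (M *v y)"
  shows "transpose M = M"
proof -
  have "(\<lambda>x. transpose M *v x) = (\<lambda>x. M *v x)"
    using adjoint_matrix[of M] adjoint_unique[of "\<lambda>x. M *v x" "\<lambda>x. M *v x"] assms by simp
  then show ?thesis
    by (metis matrix_of_matrix_vector_mul)
qed

definition penrose_conditions :: "real^'c^'r \<Rightarrow> real^'r^'c \<Rightarrow> bool" where
  "penrose_conditions A X \<longleftrightarrow> A ** X ** A = A \<and> X ** A ** X = X \<and>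
     transpose (A ** X) = A ** X \<and> transpose (X ** A) = X ** A"

lemma penrose_conditions_pinv_map: "penrose_conditions A (matrix (pinv_map A))"
proof -
  let ?X = "matrix (pinv_map A)"
  have X: "?X *v y = pinv_map A y" for y
    by (simp add: matrix_works linear_pinv_map)
  have AX: "(A ** ?X) *v y = closest_point (range (\<lambda>x. A *v x)) y" for y
    by (simp add: X matrix_vector_mult_pinv_map flip: matrix_vector_mul_assoc)
  have XA: "(?X ** A) *v x = closest_point (span (rows A)) x" for x
    by (simp add: X pinv_map_matrix_vector_mult flip: matrix_vector_mul_assoc)
  have "(A ** ?X ** A) *v x = A *v x" for x
    using AX[of "A *v x"] by (simp add: closest_point_self matrix_vector_mul_assoc)
  moreover have "(?X ** A ** ?X) *v y = ?X *v y" for y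
    by (simp add: X pinv_map_matrix_vector_mult closest_point_self pinv_map_in_rowspace
        flip: matrix_vector_mul_assoc)
  moreover have "transpose (A ** ?X) = A ** ?X"
    by (rule matrix_symmetric_if_self_adjoint)
       (simp add: AX closest_point_subspace_self_adjoint subspace_range_matrix_vector_mult)
  moreover have "transpose (?X ** A) = ?X ** A"
    by (rule matrix_symmetric_if_self_adjoint)
       (simp add: XA closest_point_subspace_self_adjoint)
  ultimately show ?thesis
    unfolding penrose_conditions_def by (simp add: matrix_eq)
qed

lemma penrose_conditions_unique:
  assumes "penrose_conditions A X" "penrose_conditions A Y"
  shows "X = Y"
proof -
  have a1: "A ** X ** A = A" and a2: "X ** A ** X = X" and a3: "transpose (A ** X) = A ** X"
    and a4: "transpose (X ** A) = X ** A"
    using assms(1) unfolding penrose_conditions_def by auto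
  have b1: "A ** Y ** A = A" and b2: "Y ** A ** Y = Y" and b3: "transpose (A ** Y) = A ** Y"
    and b4: "transpose (Y ** A) = Y ** A"
    using assms(2) unfolding penrose_conditions_def by auto
  have "X = X ** transpose (A ** X)"
    using a2 a3 by (simp add: matrix_mul_assoc)
  also have "\<dots> = X ** transpose (A ** Y ** A ** X)"
    using b1 by simp
  also have "\<dots> = X ** transpose (A ** X) ** transpose (A ** Y)"
    by (simp add: matrix_transpose_mul matrix_mul_assoc)
  also have "\<dots> = X ** A ** Y"
    using a2 a3 b3 by (simp add: matrix_mul_assoc)
  also have "\<dots> = X ** A ** (Y ** A ** Y)"
    using b2 by simp
  also have "\<dots> = transpose (X ** A) ** transpose (Y ** A) ** Y"
    using a4 b4 by (simp add: matrix_mul_assoc)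
  also have "\<dots> = transpose (Y ** (A ** X ** A)) ** Y"
    by (simp add: matrix_transpose_mul matrix_mul_assoc)
  also have "\<dots> = Y"
    using a1 b2 b4 by simp
  finally show ?thesis .
qed

lemma pinv_penrose_conditions: "penrose_conditions A (pinv A)"
proof -
  have "\<exists>!X. penrose_conditions A X"
    using penrose_conditions_pinv_map penrose_conditions_unique by blast
  then show ?thesis
    unfolding pinv_def penrose_conditions_def[symmetric] by (rule theI')
qed

lemma pinv_mult_symmetric: "transpose (pinv A ** A) = pinv A ** A"
  using pinv_penrose_conditions[of A] unfolding penrose_conditions_def by blast

lemma pinv_mult_idempotent: "pinv A ** A ** (pinv A ** A) = pinv A ** A"
  using pinv_penrose_conditions[of A] unfolding penrose_conditions_def
  by (simp add: matrix_mul_assoc)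

lemma pinv_mult_fixes_transpose_range:
  "(pinv A ** A) *v (transpose A *v v) = transpose A *v v"
proof -
  have "A ** (pinv A ** A) = A"
    using pinv_penrose_conditions[of A] unfolding penrose_conditions_def
    by (simp add: matrix_mul_assoc)
  then have "(pinv A ** A) ** transpose A = transpose A"
    by (metis pinv_mult_symmetric matrix_transpose_mul)
  then show ?thesis
    by (simp add: matrix_vector_mul_assoc del: transpose_matrix_vector)
qed

section \<open>The semi-norm induced by \<open>A\<^sup>+A\<close> and its dual\<close>

lemma symmetric_matrix_inner:
  fixes P :: "real^'n^'n"
  assumes "transpose P = P"
  shows "(P *v x) \<bullet> y = x \<bullet> (P *v y)"
  by (metis assms dot_lmul_matrix vector_transpose_matrix)

lemma seminorm_PA_eq_norm: "seminorm_PA A x = norm ((pinv A ** A) *v x)"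
proof -
  let ?P = "pinv A ** A"
  have "(?P *v x) \<bullet> (?P *v x) = x \<bullet> (?P *v (?P *v x))"
    by (rule symmetric_matrix_inner[OF pinv_mult_symmetric])
  also have "\<dots> = x \<bullet> (?P *v x)"
    using pinv_mult_idempotent[of A] by (simp add: matrix_vector_mul_assoc)
  finally show ?thesis
    unfolding seminorm_PA_def by (simp add: norm_eq_sqrt_inner)
qed

lemma dual_seminorm_PA_eq_norm:
  assumes "(pinv A ** A) *v z = z"
  shows "dual_seminorm_PA A z = ereal (norm z)"
  unfolding dual_seminorm_PA_def
proof (rule antisym)
  let ?P = "pinv A ** A"
  show "(SUP x\<in>{x. seminorm_PA A x \<le> 1}. ereal (z \<bullet> x)) \<le> ereal (norm z)"
  proof (rule SUP_least)
    fix x assume "x \<in> {x. seminorm_PA A x \<le> 1}"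
    then have "norm (?P *v x) \<le> 1"
      by (simp add: seminorm_PA_eq_norm)
    moreover have "z \<bullet> x = z \<bullet> (?P *v x)"
      using symmetric_matrix_inner[OF pinv_mult_symmetric, of A z x] assms by simp
    ultimately have "z \<bullet> x \<le> norm z"
      by (metis norm_cauchy_schwarz mult_left_le norm_ge_zero order_trans)
    then show "ereal (z \<bullet> x) \<le> ereal (norm z)" by simp
  qed
  have "?P *v sgn z = sgn z"
    using assms by (simp add: sgn_div_norm matrix_vector_mult_scaleR)
  then have "sgn z \<in> {x. seminorm_PA A x \<le> 1}"
    by (simp add: seminorm_PA_eq_norm norm_sgn)
  moreover have "z \<bullet> sgn z = norm z"
    by (cases "z = 0") (simp_all add: sgn_div_norm dot_square_norm power2_eq_square)
  ultimately show "ereal (norm z) \<le> (SUP x\<in>{x. seminorm_PA A x \<le> 1}. ereal (z \<bullet> x))"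
    by (metis SUP_upper)
qed

section \<open>Differentiability of the conjugate of a strongly convex function\<close>

lemma strongly_convex_above_tangent:
  fixes f f' :: "real \<Rightarrow> real"
  assumes convex: "strongly_convex \<mu> f"
    and deriv: "\<And>x. (f has_real_derivative f' x) (at x)"
  shows "f a + f' a * (b - a) + \<mu> / 2 * (b - a)^2 \<le> f b"
proof -
  define g where "g x = f x - \<mu> / 2 * x^2" for x
  have "convex_on UNIV g"
  proof (rule convex_onI)
    fix t x y :: real assume t: "0 < t" "t < 1"
    have "f ((1 - t) * x + (1 - (1 - t)) * y)
        \<le> (1 - t) * f x + (1 - (1 - t)) * f y - \<mu> / 2 * (1 - t) * (1 - (1 - t)) * (x - y)^2"
    proof -
      have "0 \<le> 1 - t \<and> 1 - t \<le> 1" using t by simp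
      then show ?thesis using convex unfolding strongly_convex_def by blast
    qed
    moreover have "\<mu> * ((1 - t) * x + t * y)^2
        = (1 - t) * (\<mu> * x^2) + t * (\<mu> * y^2) - \<mu> * (1 - t) * t * (x - y)^2"
      by (simp add: power2_eq_square algebra_simps)
    ultimately show "g ((1 - t) *\<^sub>R x + t *\<^sub>R y) \<le> (1 - t) * g x + t * g y"
      unfolding g_def by (simp add: field_simps)
  qed auto
  moreover have "(g has_real_derivative (f' a - \<mu> * a)) (at a)"
    unfolding g_def[abs_def] by (auto intro!: derivative_eq_intros deriv)
  ultimately have "(f' a - \<mu> * a) * (b - a) \<le> g b - g a"
    by (intro convex_on_imp_above_tangent) auto
  then show ?thesis
    unfolding g_def by (simp add: power2_eq_square algebra_simps)
qed

lemma strongly_convex_derivative_monotone: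
  fixes f f' :: "real \<Rightarrow> real"
  assumes "strongly_convex \<mu> f" "\<And>x. (f has_real_derivative f' x) (at x)"
  shows "\<mu> * (b - a)^2 \<le> (f' b - f' a) * (b - a)"
  using strongly_convex_above_tangent[OF assms, of a b] strongly_convex_above_tangent[OF assms, of b a]
  by (simp add: power2_eq_square algebra_simps)

lemma strongly_monotone_continuous_surj:
  fixes f' :: "real \<Rightarrow> real"
  assumes cont: "continuous_on UNIV f'" and "\<mu> > 0"
    and mono: "\<And>a b. \<mu> * (b - a)^2 \<le> (f' b - f' a) * (b - a)"
  shows "surj f'"
proof -
  have grow: "\<mu> * (b - a) \<le> f' b - f' a" if "a \<le> b" for a b
  proof (cases "a = b")
    case False
    with that have "0 < b - a" by simp
    moreover have "(\<mu> * (b - a)) * (b - a) \<le> (f' b - f' a) * (b - a)"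
      using mono[of a b] by (simp add: power2_eq_square algebra_simps)
    ultimately show ?thesis by simp
  qed simp
  have "\<exists>x. f' x = t" for t
  proof -
    define a where "a = (t - f' 0) / \<mu>"
    have "\<mu> * a = t - f' 0"
      using \<open>\<mu> > 0\<close> by (simp add: a_def)
    then consider "0 \<le> a" "t \<le> f' a" | "a \<le> 0" "f' a \<le> t"
      using grow[of 0 a] grow[of a 0] by fastforce
    then show ?thesis
    proof cases
      case 1
      then have "f' 0 \<le> t"
        using \<open>\<mu> * a = t - f' 0\<close> \<open>\<mu> > 0\<close> mult_nonneg_nonneg[of \<mu> a] by linarith
      then show ?thesis
        using IVT'[of f' 0 t a] 1 continuous_on_subset[OF cont] by blast
    next
      case 2
      then have "t \<le> f' 0"
        using \<open>\<mu> * a = t - f' 0\<close> \<open>\<mu> > 0\<close> mult_nonneg_nonpos[of \<mu> a] by linarith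
      then show ?thesis
        using IVT'[of f' a t 0] 2 continuous_on_subset[OF cont] by blast
    qed
  qed
  then show ?thesis by (metis surj_def)
qed

lemma has_real_derivative_increment_between:
  fixes \<phi> d :: "real \<Rightarrow> real"
  assumes lower: "\<And>z. (z - y) * d y \<le> \<phi> z - \<phi> y"
    and upper: "\<And>z. \<phi> z - \<phi> y \<le> (z - y) * d z"
    and cont: "isCont d y"
  shows "(\<phi> has_real_derivative d y) (at y)"
proof -
  let ?q = "\<lambda>z. (\<phi> z - \<phi> y) / (z - y)"
  have between: "min (d y) (d z) \<le> ?q z \<and> ?q z \<le> max (d y) (d z)" if "z \<noteq> y" for z
  proof (cases "y < z")
    case True
    then have "d y \<le> ?q z" "?q z \<le> d z"
      using lower[of z] upper[of z] by (simp_all add: divide_simps mult.commute)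
    then show ?thesis by (simp add: min_le_iff_disj le_max_iff_disj)
  next
    case False
    with that have "z < y" by simp
    then have "d z \<le> ?q z" "?q z \<le> d y"
      using lower[of z] upper[of z] by (simp_all add: divide_simps mult.commute)
    then show ?thesis by (simp add: min_le_iff_disj le_max_iff_disj)
  qed
  have "((\<lambda>z. min (d y) (d z)) \<longlongrightarrow> d y) (at y)" "((\<lambda>z. max (d y) (d z)) \<longlongrightarrow> d y) (at y)"
    using cont by (auto intro!: tendsto_eq_intros simp: isCont_def)
  then have "(?q \<longlongrightarrow> d y) (at y)"
    by (rule tendsto_sandwich[rotated 2]) (use between in \<open>auto simp: eventually_at_filter\<close>)
  then show ?thesis
    by (simp add: has_field_derivative_iff)
qed

lemma fenchel_conj_eq_maximum:
  assumes "\<And>x. t * x - f x \<le> t * x\<^sub>0 - f x\<^sub>0"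
  shows "fenchel_conj f t = t * x\<^sub>0 - f x\<^sub>0"
  unfolding fenchel_conj_def by (rule cSup_eq_maximum) (use assms in auto)

lemma fenchel_conj_has_derivative_inv:
  fixes f f' :: "real \<Rightarrow> real"
  assumes convex: "strongly_convex \<mu> f" and "\<mu> > 0"
    and deriv: "\<And>x. (f has_real_derivative f' x) (at x)"
    and cont: "continuous_on UNIV f'"
  shows "(fenchel_conj f has_real_derivative inv f' y) (at y)"
proof -
  note mono = strongly_convex_derivative_monotone[OF convex deriv]
  have "surj f'"
    by (rule strongly_monotone_continuous_surj[OF cont \<open>\<mu> > 0\<close> mono])
  then have inv: "f' (inv f' t) = t" for t
    by (simp add: surj_f_inv_f)
  have young: "t * x - f x \<le> t * inv f' t - f (inv f' t)" for t x
  proof -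
    have "f (inv f' t) + t * (x - inv f' t) + \<mu> / 2 * (x - inv f' t)^2 \<le> f x"
      using strongly_convex_above_tangent[OF convex deriv, of "inv f' t" x] by (simp add: inv)
    moreover have "0 \<le> \<mu> / 2 * (x - inv f' t)^2"
      using \<open>\<mu> > 0\<close> by simp
    ultimately show ?thesis
      by (simp add: right_diff_distrib)
  qed
  have conj: "fenchel_conj f t = t * inv f' t - f (inv f' t)" for t
    by (rule fenchel_conj_eq_maximum) (rule young)
  have "\<mu> * \<bar>inv f' z - inv f' w\<bar> \<le> \<bar>z - w\<bar>" for z w
  proof (cases "inv f' z = inv f' w")
    case False
    let ?u = "inv f' z - inv f' w"
    have "(\<mu> * \<bar>?u\<bar>) * \<bar>?u\<bar> = \<mu> * ?u^2"
      by (simp add: power2_eq_square abs_mult_self_eq)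
    also have "\<dots> \<le> (z - w) * ?u"
      using mono[of "inv f' z" "inv f' w"] by (simp add: inv)
    also have "\<dots> \<le> \<bar>z - w\<bar> * \<bar>?u\<bar>"
      by (metis abs_ge_self abs_mult)
    finally show ?thesis
      using False by simp
  qed simp
  then have "(1 / \<mu>)-lipschitz_on UNIV (inv f')"
    using \<open>\<mu> > 0\<close> by (intro lipschitz_onI) (simp_all add: dist_real_def field_simps)
  then have "isCont (inv f') y"
    using lipschitz_on_continuous_on continuous_on_eq_continuous_at open_UNIV by blast
  then show ?thesis
  proof (rule has_real_derivative_increment_between[rotated 2])
    fix z
    show "(z - y) * inv f' y \<le> fenchel_conj f z - fenchel_conj f y"
      using young[of z "inv f' y"] by (simp add: conj algebra_simps)
    show "fenchel_conj f z - fenchel_conj f y \<le> (z - y) * inv f' z"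
      using young[of y "inv f' z"] by (simp add: conj algebra_simps)
  qed
qed

lemma smooth_with_continuous_derivative:
  assumes "smooth_with M f"
  obtains f' where "\<And>x. (f has_real_derivative f' x) (at x)" "continuous_on UNIV f'"
proof -
  obtain f' where deriv: "\<And>x. (f has_real_derivative f' x) (at x)"
    and lipschitz: "\<And>x y. \<bar>f' x - f' y\<bar> \<le> M * \<bar>x - y\<bar>"
    using assms unfolding smooth_with_def by blast
  have "0 \<le> M"
    using lipschitz[of 1 0] by simp
  then have "M-lipschitz_on UNIV f'"
    using lipschitz by (intro lipschitz_onI) (simp_all add: dist_real_def)
  then show ?thesis
    using that deriv lipschitz_on_continuous_on by blast
qed

section \<open>The gradient of the dual function\<close>

lemma has_gradient_sum_matrix_components:
  fixes A :: "real^'c^'r"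
  assumes "\<And>i. (\<phi> i has_real_derivative D i) (at ((A *v x) $ i))"
  shows "GDERIV (\<lambda>x. \<Sum>i\<in>UNIV. \<phi> i ((A *v x) $ i)) x :> transpose A *v (\<chi> i. D i)"
proof -
  have lin: "bounded_linear (\<lambda>x. (A *v x) $ i)" for i
    using bounded_linear_compose[OF bounded_linear_vec_nth] matrix_vector_mul_linear linear_linear
    by blast
  have "((\<lambda>x. \<phi> i ((A *v x) $ i)) has_derivative (\<lambda>h. D i * (A *v h) $ i)) (at x)" for i
    using has_derivative_compose[OF bounded_linear_imp_has_derivative[OF lin]
        assms[unfolded has_field_derivative_def]] .
  then have "((\<lambda>x. \<Sum>i\<in>UNIV. \<phi> i ((A *v x) $ i)) has_derivative
      (\<lambda>h. \<Sum>i\<in>UNIV. D i * (A *v h) $ i)) (at x)"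
    by (rule has_derivative_sum)
  moreover have "h \<bullet> (transpose A *v (\<chi> i. D i)) = (\<chi> i. D i) \<bullet> (A *v h)" for h
    by (simp add: inner_commute[of h] dot_lmul_matrix)
  then have "(\<Sum>i\<in>UNIV. D i * (A *v h) $ i) = h \<bullet> (transpose A *v (\<chi> i. D i))" for h
    by (simp add: inner_vec_def)
  ultimately show ?thesis
    unfolding gderiv_def by simp
qed

theorem lemma3:
  fixes ends :: "'e::finite \<Rightarrow> 'n::finite set"
    and A :: "real^'e^'n"
    and f :: "'n \<Rightarrow> real \<Rightarrow> real"
    and M \<mu> :: "'n \<Rightarrow> real"
    and F :: "real^'e \<Rightarrow> real"
  assumes "undirected_graph ends"
    and "incidence_matrix ends A"
    and "\<And>i. smooth_with (M i) (f i)"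
    and "\<And>i. \<mu> i > 0"
    and "\<And>i. strongly_convex (\<mu> i) (f i)"
    and "\<And>lam. F lam = (\<Sum>i\<in>UNIV. fenchel_conj (f i) ((A *v lam) $ i))"
  shows "\<exists>g. GDERIV F lam :> g \<and> norm g = seminorm_PA A g
             \<and> ereal (seminorm_PA A g) = dual_seminorm_PA A g"
proof -
  have "\<exists>D. (fenchel_conj (f i) has_real_derivative D) (at ((A *v lam) $ i))" for i
  proof -
    obtain f' where "\<And>x. (f i has_real_derivative f' x) (at x)" "continuous_on UNIV f'"
      using smooth_with_continuous_derivative[OF assms(3)[of i]] by blast
    then show ?thesis
      using fenchel_conj_has_derivative_inv assms(4,5) by blast
  qed
  then obtain D where D: "\<And>i. (fenchel_conj (f i) has_real_derivative D i) (at ((A *v lam) $ i))"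
    by metis
  have "F = (\<lambda>lam. \<Sum>i\<in>UNIV. fenchel_conj (f i) ((A *v lam) $ i))"
    using assms(6) by (rule ext)
  then have "GDERIV F lam :> transpose A *v (\<chi> i. D i)"
    using has_gradient_sum_matrix_components[OF D] by simp
  moreover have "(pinv A ** A) *v (transpose A *v (\<chi> i. D i)) = transpose A *v (\<chi> i. D i)"
    by (rule pinv_mult_fixes_transpose_range)
  ultimately show ?thesis
    by (metis seminorm_PA_eq_norm dual_seminorm_PA_eq_norm)
qed

end
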